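(* Let $k\in\mathbb{R}_{\ge 0}$ and let $G$ be a graph on $n\ge 2$ vertices such that every subgraph $H\subseteq G$ with $|V(H)|\ge 3$ satisfies $|E(H)|\le k(|V(H)|-2)$. If $G$ admits an interval colouring, then $t(G)\le \frac{k}{2}n+1-k$.
   Context: An interval colouring of a graph $G$ is a proper edge-colouring $c\colon E(G)\to\mathbb{N}$ such that for every vertex $v$, the set of colours on edges incident to $v$ is a set of consecutive integers. For an interval colourable graph $G$, $t(G)$ denotes the greatest number of distinct colours used in an interval colouring of $G$. *)

theory Defs
  imports Complex_Main
begin

definition simple_graph :: "'a set \<Rightarrow> 'a set set \<Rightarrow> bool" where
  "simple_graph V E \<longleftrightarrow> finite V \<and> (\<forall>e\<in>E. e \<subseteq> V \<and> card e = 2)"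

definition subgraph :: "'a set \<Rightarrow> 'a set set \<Rightarrow> 'a set \<Rightarrow> 'a set set \<Rightarrow> bool" where
  "subgraph W F V E \<longleftrightarrow> W \<subseteq> V \<and> F \<subseteq> E \<and> (\<forall>e\<in>F. e \<subseteq> W)"

definition proper_edge_colouring :: "'a set set \<Rightarrow> ('a set \<Rightarrow> nat) \<Rightarrow> bool" where
  "proper_edge_colouring E c \<longleftrightarrow>
     (\<forall>e\<in>E. \<forall>f\<in>E. e \<noteq> f \<and> e \<inter> f \<noteq> {} \<longrightarrow> c e \<noteq> c f)"

text \<open>A set of consecutive integers (the empty set counts as consecutive).\<close>
definition consecutive :: "nat set \<Rightarrow> bool" where
  "consecutive S \<longleftrightarrow> (\<exists>a b. S = {a..b})"

definition interval_colouring :: "'a set \<Rightarrow> 'a set set \<Rightarrow> ('a set \<Rightarrow> nat) \<Rightarrow> bool" where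
  "interval_colouring V E c \<longleftrightarrow> proper_edge_colouring E c \<and>
     (\<forall>v\<in>V. consecutive (c ` {e\<in>E. v \<in> e}))"

definition interval_colourable :: "'a set \<Rightarrow> 'a set set \<Rightarrow> bool" where
  "interval_colourable V E \<longleftrightarrow> (\<exists>c. interval_colouring V E c)"

definition t_max :: "'a set \<Rightarrow> 'a set set \<Rightarrow> nat" where
  "t_max V E = Max {card (c ` E) | c. interval_colouring V E c}"

end

theory Submission
  imports Defs
begin

text \<open>
  Let S be the set of colours used on an edge set F. If some colour s strictly between
  min S and max S occurs on exactly one edge e0, split F into the edges of colour at most s
  and those of colour at least s. A vertex incident to both parts sees colours on both sides
  of s, hence, by consecutiveness, sees s and lies on e0; so the two parts share exactly
  the two ends of e0 and exactly the colour s, and induction on the number of edges closes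
  this case. Otherwise every inner colour occurs at least twice, so 2|S| \<le> |F| + 2, and the
  density hypothesis |F| \<le> k(|\<Union>F| - 2) gives 2(|S| - 1) \<le> k(|\<Union>F| - 2).
\<close>

definition locally_consecutive :: "'a set set \<Rightarrow> ('a set \<Rightarrow> nat) \<Rightarrow> bool" where
  "locally_consecutive F c \<longleftrightarrow> (\<forall>v. consecutive (c ` {e\<in>F. v \<in> e}))"

lemma consecutive_Int_atMost: "consecutive A \<Longrightarrow> consecutive (A \<inter> {..s})"
proof -
  assume "consecutive A"
  then obtain a b where "A = {a..b}" unfolding consecutive_def by blast
  then have "A \<inter> {..s} = {a..min b s}" by auto
  then show ?thesis unfolding consecutive_def by blast
qed

lemma consecutive_Int_atLeast: "consecutive A \<Longrightarrow> consecutive (A \<inter> {s..})"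
proof -
  assume "consecutive A"
  then obtain a b where "A = {a..b}" unfolding consecutive_def by blast
  then have "A \<inter> {s..} = {max a s..b}" by auto
  then show ?thesis unfolding consecutive_def by blast
qed

lemma locally_consecutive_colour_atMost:
  assumes "locally_consecutive F c"
  shows "locally_consecutive {e\<in>F. c e \<le> s} c"
  unfolding locally_consecutive_def
proof
  fix v
  have "c ` {e\<in>{e\<in>F. c e \<le> s}. v \<in> e} = c ` {e\<in>F. v \<in> e} \<inter> {..s}" by auto
  then show "consecutive (c ` {e\<in>{e\<in>F. c e \<le> s}. v \<in> e})"
    using assms consecutive_Int_atMost unfolding locally_consecutive_def by metis
qed

lemma locally_consecutive_colour_atLeast:
  assumes "locally_consecutive F c"
  shows "locally_consecutive {e\<in>F. s \<le> c e} c"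
  unfolding locally_consecutive_def
proof
  fix v
  have "c ` {e\<in>{e\<in>F. s \<le> c e}. v \<in> e} = c ` {e\<in>F. v \<in> e} \<inter> {s..}" by auto
  then show "consecutive (c ` {e\<in>{e\<in>F. s \<le> c e}. v \<in> e})"
    using assms consecutive_Int_atLeast unfolding locally_consecutive_def by metis
qed

lemma card_Int_atMost_add_card_Int_atLeast:
  fixes S :: "'b::linorder set"
  assumes "finite S" "s \<in> S"
  shows "card (S \<inter> {..s}) + card (S \<inter> {s..}) = card S + 1"
proof -
  have "(S \<inter> {..s}) \<union> (S \<inter> {s..}) = S" by auto
  moreover have "(S \<inter> {..s}) \<inter> (S \<inter> {s..}) = {s}" using assms(2) by auto
  ultimately show ?thesis using card_Un_Int[of "S \<inter> {..s}" "S \<inter> {s..}"] assms(1) by simp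
qed

lemma card_Un_ge_3_if_distinct_2_sets:
  assumes "card e1 = 2" "card e2 = 2" "e1 \<noteq> e2"
  shows "card (e1 \<union> e2) \<ge> 3"
proof (rule ccontr)
  assume "\<not> card (e1 \<union> e2) \<ge> 3"
  moreover have "finite (e1 \<union> e2)" using assms card.infinite by fastforce
  ultimately have "e1 = e1 \<union> e2" "e2 = e1 \<union> e2"
    using card_seteq[of "e1 \<union> e2"] assms(1,2) by auto
  with assms(3) show False by simp
qed

lemma Union_colour_atMost_Int_Union_colour_atLeast:
  assumes cons: "locally_consecutive F c" and unique: "{e\<in>F. c e = s} = {e0}"
  shows "\<Union>{e\<in>F. c e \<le> s} \<inter> \<Union>{e\<in>F. s \<le> c e} = e0"
proof
  show "e0 \<subseteq> \<Union>{e\<in>F. c e \<le> s} \<inter> \<Union>{e\<in>F. s \<le> c e}" using unique by auto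
next
  show "\<Union>{e\<in>F. c e \<le> s} \<inter> \<Union>{e\<in>F. s \<le> c e} \<subseteq> e0"
  proof
    fix w assume "w \<in> \<Union>{e\<in>F. c e \<le> s} \<inter> \<Union>{e\<in>F. s \<le> c e}"
    then obtain e1 e2 where e1: "e1 \<in> F" "w \<in> e1" "c e1 \<le> s"
      and e2: "e2 \<in> F" "w \<in> e2" "s \<le> c e2" by auto
    obtain x y where xy: "c ` {e\<in>F. w \<in> e} = {x..y}"
      using cons unfolding locally_consecutive_def consecutive_def by blast
    have "c e1 \<in> {x..y}" "c e2 \<in> {x..y}" using e1 e2 xy[symmetric] by auto
    with e1 e2 have "s \<in> c ` {e\<in>F. w \<in> e}" unfolding xy by auto
    then show "w \<in> e0" using unique by auto
  qed
qed

lemma double_card_image_le_if_no_inner_singleton_class: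
  fixes c :: "'e \<Rightarrow> 'b::linorder"
  assumes "finite F"
    and inner: "\<forall>s\<in>c ` F. Min (c ` F) < s \<and> s < Max (c ` F) \<longrightarrow> card {e\<in>F. c e = s} \<noteq> 1"
  shows "2 * card (c ` F) \<le> card F + 2"
proof -
  define S where "S = c ` F"
  define M where "M = {Min S, Max S}"
  have "finite S" using assms(1) S_def by simp
  have class_bound: "2 \<le> card {e\<in>F. c e = s} + (if s \<in> M then 1 else 0)" if "s \<in> S" for s
  proof -
    have "card {e\<in>F. c e = s} \<ge> 1"
      using that assms(1) unfolding S_def by (auto simp: Suc_le_eq card_gt_0_iff)
    moreover have "card {e\<in>F. c e = s} \<noteq> 1" if "s \<notin> M"
    proof -
      have "Min S \<le> s" "s \<le> Max S" using \<open>s \<in> S\<close> \<open>finite S\<close> by auto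
      then show ?thesis using inner \<open>s \<in> S\<close> \<open>s \<notin> M\<close> unfolding S_def M_def by force
    qed
    ultimately show ?thesis by (cases "s \<in> M") auto
  qed
  have "2 * card S = (\<Sum>s\<in>S. 2)" by simp
  also have "\<dots> \<le> (\<Sum>s\<in>S. card {e\<in>F. c e = s} + (if s \<in> M then 1 else 0))"
    using class_bound by (rule sum_mono)
  also have "\<dots> = card F + card (S \<inter> M)"
    using sum.image_gen[OF assms(1), of "\<lambda>_. 1::nat" c] sum.inter_restrict[OF \<open>finite S\<close>, of "\<lambda>_. 1::nat" M]
    unfolding S_def by (simp add: sum.distrib)
  also have "card (S \<inter> M) \<le> card M" unfolding M_def by (simp add: card_mono)
  also have "\<dots> \<le> 2" unfolding M_def by (simp add: card_insert_if)
  finally show ?thesis unfolding S_def by simp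
qed

lemma density_bound_split_at_singleton_colour:
  fixes k :: real
  assumes fin: "finite F" and edges: "\<forall>e\<in>F. card e = 2" and cons: "locally_consecutive F c"
    and unique: "{e\<in>F. c e = s} = {e0}"
    and bound_le: "2 * (real (card (c ` {e\<in>F. c e \<le> s})) - 1)
        \<le> k * (real (card (\<Union>{e\<in>F. c e \<le> s})) - 2)"
    and bound_ge: "2 * (real (card (c ` {e\<in>F. s \<le> c e})) - 1)
        \<le> k * (real (card (\<Union>{e\<in>F. s \<le> c e})) - 2)"
  shows "2 * (real (card (c ` F)) - 1) \<le> k * (real (card (\<Union>F)) - 2)"
proof -
  define F1 where "F1 = {e\<in>F. c e \<le> s}"
  define F2 where "F2 = {e\<in>F. s \<le> c e}"
  have "e0 \<in> {e\<in>F. c e = s}" using unique by simp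
  then have "s \<in> c ` F" by auto
  have "c ` F1 = c ` F \<inter> {..s}" "c ` F2 = c ` F \<inter> {s..}" unfolding F1_def F2_def by auto
  then have colours: "card (c ` F1) + card (c ` F2) = card (c ` F) + 1"
    using card_Int_atMost_add_card_Int_atLeast[OF _ \<open>s \<in> c ` F\<close>] fin by simp
  have finU: "finite (\<Union>F)" using fin edges by (intro finite_Union) (auto intro: card_ge_0_finite)
  have "F1 \<union> F2 = F" unfolding F1_def F2_def by auto
  then have "\<Union>F1 \<union> \<Union>F2 = \<Union>F" by blast
  moreover have "\<Union>F1 \<inter> \<Union>F2 = e0"
    using Union_colour_atMost_Int_Union_colour_atLeast[OF cons unique] unfolding F1_def F2_def .
  moreover have "card e0 = 2" using unique edges by auto
  moreover have "finite (\<Union>F1)" "finite (\<Union>F2)"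
    using finU unfolding F1_def F2_def by (auto intro: finite_subset)
  ultimately have vertices: "card (\<Union>F1) + card (\<Union>F2) = card (\<Union>F) + 2"
    using card_Un_Int[of "\<Union>F1" "\<Union>F2"] by simp
  have "k * (real (card (\<Union>F1)) - 2) + k * (real (card (\<Union>F2)) - 2)
      = k * (real (card (\<Union>F1)) + real (card (\<Union>F2)) - 4)" by (simp add: algebra_simps)
  also have "\<dots> = k * (real (card (\<Union>F)) - 2)" using vertices by simp
  finally have "k * (real (card (\<Union>F1)) - 2) + k * (real (card (\<Union>F2)) - 2) = k * (real (card (\<Union>F)) - 2)" .
  moreover have "real (card (c ` F1)) + real (card (c ` F2)) = real (card (c ` F)) + 1"
    using colours by linarith
  ultimately show ?thesis using bound_le bound_ge unfolding F1_def F2_def by argo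
qed

lemma density_bound_no_inner_singleton_colour:
  fixes k :: real
  assumes fin: "finite F" "F \<noteq> {}" and edges: "\<forall>e\<in>F. card e = 2" and "k \<ge> 0"
    and dens: "3 \<le> card (\<Union>F) \<Longrightarrow> real (card F) \<le> k * (real (card (\<Union>F)) - 2)"
    and inner: "\<forall>s\<in>c ` F. Min (c ` F) < s \<and> s < Max (c ` F) \<longrightarrow> card {e\<in>F. c e = s} \<noteq> 1"
  shows "2 * (real (card (c ` F)) - 1) \<le> k * (real (card (\<Union>F)) - 2)"
proof -
  have finU: "finite (\<Union>F)" using fin edges by (intro finite_Union) (auto intro: card_ge_0_finite)
  show ?thesis
  proof (cases "card (c ` F) = 1")
    case True
    obtain e where "e \<in> F" using \<open>F \<noteq> {}\<close> by blast
    then have "2 \<le> card (\<Union>F)" using edges finU card_mono[of "\<Union>F" e] by fastforce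
    then show ?thesis using True \<open>k \<ge> 0\<close> by simp
  next
    case False
    then have "card (c ` F) \<ge> 2" using fin by (cases "card (c ` F)") auto
    moreover have "2 * card (c ` F) \<le> card F + 2"
      using double_card_image_le_if_no_inner_singleton_class[OF fin(1) inner] .
    ultimately have "\<not> card F \<le> Suc 0" by linarith
    then obtain e1 e2 where "e1 \<in> F" "e2 \<in> F" "e1 \<noteq> e2"
      by (auto simp: card_le_Suc0_iff_eq[OF fin(1)])
    then have "3 \<le> card (\<Union>F)"
      using card_Un_ge_3_if_distinct_2_sets[of e1 e2] edges finU card_mono[of "\<Union>F" "e1 \<union> e2"]
      by fastforce
    then have "real (card F) \<le> k * (real (card (\<Union>F)) - 2)" by (rule dens)
    moreover have "2 * real (card (c ` F)) \<le> real (card F) + 2"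
      using \<open>2 * card (c ` F) \<le> card F + 2\<close> by linarith
    ultimately show ?thesis by argo
  qed
qed

lemma colour_count_le_density_bound:
  fixes k :: real
  assumes "finite F" "F \<noteq> {}" "\<forall>e\<in>F. card e = 2" "k \<ge> 0"
    and "\<And>G. G \<subseteq> F \<Longrightarrow> 3 \<le> card (\<Union>G) \<Longrightarrow> real (card G) \<le> k * (real (card (\<Union>G)) - 2)"
    and "locally_consecutive F c"
  shows "2 * (real (card (c ` F)) - 1) \<le> k * (real (card (\<Union>F)) - 2)"
  using assms
proof (induction "card F" arbitrary: F rule: less_induct)
  case less
  note fin = \<open>finite F\<close> and edges = \<open>\<forall>e\<in>F. card e = 2\<close>
    and dens = less.prems(5) and cons = \<open>locally_consecutive F c\<close>
  define S where "S = c ` F"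
  have "finite S" "S \<noteq> {}" using fin \<open>F \<noteq> {}\<close> S_def by auto
  show ?case
  proof (cases "\<exists>s\<in>S. Min S < s \<and> s < Max S \<and> card {e\<in>F. c e = s} = 1")
    case True
    then obtain s where s: "Min S < s" "s < Max S" "card {e\<in>F. c e = s} = 1" by blast
    then obtain e0 where e0: "{e\<in>F. c e = s} = {e0}" using card_1_singletonE by metis
    have IH: "2 * (real (card (c ` F')) - 1) \<le> k * (real (card (\<Union>F')) - 2)"
      if "F' \<subset> F" "F' \<noteq> {}" "locally_consecutive F' c" for F'
    proof (rule less.hyps)
      show "card F' < card F" using fin that(1) by (rule psubset_card_mono)
      show "\<And>G. G \<subseteq> F' \<Longrightarrow> 3 \<le> card (\<Union>G) \<Longrightarrow> real (card G) \<le> k * (real (card (\<Union>G)) - 2)"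
        using dens that(1) by blast
    qed (use that fin edges \<open>k \<ge> 0\<close> in \<open>auto intro: finite_subset\<close>)
    obtain e_min e_max where "e_min \<in> F" "c e_min = Min S" "e_max \<in> F" "c e_max = Max S"
      using Min_in[OF \<open>finite S\<close> \<open>S \<noteq> {}\<close>] Max_in[OF \<open>finite S\<close> \<open>S \<noteq> {}\<close>]
      unfolding S_def by (metis imageE)
    with s have "e_max \<in> F - {e\<in>F. c e \<le> s}" "e_min \<in> F - {e\<in>F. s \<le> c e}" by auto
    then have "{e\<in>F. c e \<le> s} \<subset> F" "{e\<in>F. s \<le> c e} \<subset> F" by blast+
    moreover have "{e\<in>F. c e \<le> s} \<noteq> {}" "{e\<in>F. s \<le> c e} \<noteq> {}" using e0 by auto
    ultimately show ?thesis
      by (intro density_bound_split_at_singleton_colour[OF fin edges cons e0] IH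
          locally_consecutive_colour_atMost[OF cons] locally_consecutive_colour_atLeast[OF cons])
  next
    case False
    then have inner: "\<forall>s\<in>c ` F. Min (c ` F) < s \<and> s < Max (c ` F) \<longrightarrow> card {e\<in>F. c e = s} \<noteq> 1"
      unfolding S_def by blast
    show ?thesis
      by (rule density_bound_no_inner_singleton_colour[OF fin \<open>F \<noteq> {}\<close> edges \<open>k \<ge> 0\<close> _ inner])
        (rule dens, simp_all)
  qed
qed

lemma t_max_attained:
  assumes "finite E" "interval_colourable V E"
  obtains c where "interval_colouring V E c" "t_max V E = card (c ` E)"
proof -
  define T where "T = {card (c ` E) | c. interval_colouring V E c}"
  have "T \<subseteq> {..card E}" unfolding T_def using card_image_le[OF assms(1)] by auto
  moreover have "T \<noteq> {}" using assms(2) unfolding T_def interval_colourable_def by auto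
  ultimately have "Max T \<in> T" using finite_subset by (metis Max_in finite_atMost)
  then show ?thesis using that unfolding T_def t_max_def by auto
qed

lemma interval_colouring_locally_consecutive:
  assumes "interval_colouring V E c" "\<forall>e\<in>E. e \<subseteq> V"
  shows "locally_consecutive E c"
  unfolding locally_consecutive_def
proof
  fix v
  show "consecutive (c ` {e\<in>E. v \<in> e})"
  proof (cases "v \<in> V")
    case True
    then show ?thesis using assms(1) unfolding interval_colouring_def by blast
  next
    case False
    then have "c ` {e\<in>E. v \<in> e} = {1..0}" using assms(2) by auto
    then show ?thesis unfolding consecutive_def by blast
  qed
qed

theorem theorem4:
  fixes V :: "'a set" and E :: "'a set set" and k :: real
  assumes "simple_graph V E"
    and "k \<ge> 0"
    and "card V \<ge> 2"
    and "\<forall>W F. subgraph W F V E \<and> card W \<ge> 3 \<longrightarrow> real (card F) \<le> k * (real (card W) - 2)"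
    and "interval_colourable V E"
  shows "real (t_max V E) \<le> k / 2 * real (card V) + 1 - k"
proof -
  have "finite V" and edges: "\<forall>e\<in>E. e \<subseteq> V \<and> card e = 2"
    using assms(1) unfolding simple_graph_def by auto
  then have "finite E" by (intro finite_subset[of E "Pow V"]) auto
  then obtain c where c: "interval_colouring V E c" "t_max V E = card (c ` E)"
    using t_max_attained assms(5) by blast
  have "0 \<le> k * (real (card V) - 2)" using assms(2,3) by simp
  moreover have "2 * (real (card (c ` E)) - 1) \<le> k * (real (card V) - 2)" if "E \<noteq> {}"
  proof -
    have "2 * (real (card (c ` E)) - 1) \<le> k * (real (card (\<Union>E)) - 2)"
    proof (rule colour_count_le_density_bound)
      fix G assume "G \<subseteq> E" "3 \<le> card (\<Union>G)"
      moreover then have "subgraph (\<Union>G) G V E" unfolding subgraph_def using edges by auto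
      ultimately show "real (card G) \<le> k * (real (card (\<Union>G)) - 2)" using assms(4) by blast
    qed (use \<open>finite E\<close> that edges assms(2) interval_colouring_locally_consecutive[OF c(1)] in auto)
    also have "\<dots> \<le> k * (real (card V) - 2)"
      using assms(2) edges \<open>finite V\<close> by (intro mult_left_mono) (auto simp: Sup_le_iff card_mono)
    finally show ?thesis .
  qed
  ultimately show ?thesis using c(2) by (cases "E = {}") (auto simp: field_simps)
qed

end
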